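(* Let $G=(V,E)$ be an internally vertex-color-avoiding connected graph on $n$ vertices such that $G-e$ is not internally vertex-color-avoiding connected for any $e\in E$, and suppose the vertices are colored with exactly $k$ colors. If $k=1$, then $|E|=\binom{n}{2}$; if $k\ge 2$, then $|E|\le 2n-3$. Moreover, if $k\in\{2,3\}$, this upper bound is sharp (attained by suitable such graphs).
   Context: Vertex-colorings are arbitrary (not necessarily proper). Two vertices $u,v$ are internally vertex-$c$-avoiding connected (for a color $c$) if some $u$-$v$ path contains no internal vertex of color $c$. A graph is internally vertex-color-avoiding connected if any two vertices are internally vertex-$c$-avoiding connected for every color $c$. $G-e$ denotes $G$ with edge $e$ removed. *)

theory Defs
  imports Main
begin

definition simple_graph :: "'a set \<Rightarrow> 'a set set \<Rightarrow> bool" where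
  "simple_graph V E \<longleftrightarrow> finite V \<and> (\<forall>e\<in>E. e \<subseteq> V \<and> card e = 2)"

definition is_path :: "'a set \<Rightarrow> 'a set set \<Rightarrow> 'a list \<Rightarrow> 'a \<Rightarrow> 'a \<Rightarrow> bool" where
  "is_path V E p u v \<longleftrightarrow> p \<noteq> [] \<and> hd p = u \<and> last p = v \<and> distinct p \<and> set p \<subseteq> V \<and>
     (\<forall>i. Suc i < length p \<longrightarrow> {p ! i, p ! Suc i} \<in> E)"

definition internal_vertices :: "'a list \<Rightarrow> 'a set" where
  "internal_vertices p = set (butlast (tl p))"

definition int_vertex_avoiding_conn ::
  "'a set \<Rightarrow> 'a set set \<Rightarrow> ('a \<Rightarrow> 'b) \<Rightarrow> 'b \<Rightarrow> 'a \<Rightarrow> 'a \<Rightarrow> bool" where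
  "int_vertex_avoiding_conn V E col c u v \<longleftrightarrow>
     (\<exists>p. is_path V E p u v \<and> (\<forall>w\<in>internal_vertices p. col w \<noteq> c))"

definition int_vertex_color_avoiding_connected ::
  "'a set \<Rightarrow> 'a set set \<Rightarrow> ('a \<Rightarrow> 'b) \<Rightarrow> bool" where
  "int_vertex_color_avoiding_connected V E col \<longleftrightarrow>
     (\<forall>c\<in>col ` V. \<forall>u\<in>V. \<forall>v\<in>V. int_vertex_avoiding_conn V E col c u v)"

definition minimal_ICAC :: "'a set \<Rightarrow> 'a set set \<Rightarrow> ('a \<Rightarrow> 'b) \<Rightarrow> bool" where
  "minimal_ICAC V E col \<longleftrightarrow> int_vertex_color_avoiding_connected V E col \<and>
     (\<forall>e\<in>E. \<not> int_vertex_color_avoiding_connected V (E - {e}) col)"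

end

theory Submission
  imports Defs "HOL-Library.Transitive_Closure_Table"
begin

text \<open>
  For a colour c let W_c be the set of vertices not of colour c. An edge set F connects every
  pair of vertices internally c-avoidingly as soon as W_c is connected in F and every vertex of
  colour c has an F-neighbour in W_c. The deficiency of F at c counts the components of F on W_c
  plus the vertices of colour c without such a neighbour. Summed over the k colours it is at most
  k n for F = {}, at least k when k \<ge> 2 (every W_c is then nonempty), and it never grows when
  edges are added.

  Grow F inside E greedily: one edge between two colours lowers the sum by k; then n - 2 pendant
  edges, each attaching a new vertex, lower it by k - 1 each (for every colour except that of the
  attachment point); and as long as F is not yet internally vertex-colour-avoiding connected
  (ICAC in lemma names), E contains an edge lowering it by at least 1. The result is an ICAC
  F \<subseteq> E with at most 1 + (n - 2) + (n - 2) = 2 n - 3 edges, and minimality forces F = E.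

  With a single colour no path may have internal vertices, so the graph is complete. The bound is
  attained by the book graph: an edge between two spine vertices of different colours, both
  joined to n - 2 page vertices of a common colour.
\<close>

section \<open>Paths and internally avoiding connections\<close>

lemma is_path_iff_successively:
  "is_path V E p u v \<longleftrightarrow> p \<noteq> [] \<and> hd p = u \<and> last p = v \<and> distinct p \<and> set p \<subseteq> V \<and>
     successively (\<lambda>x y. {x, y} \<in> E) p"
  by (simp add: is_path_def successively_conv_nth)

lemma is_path_singleton: "u \<in> V \<Longrightarrow> is_path V E [u] u u"
  by (simp add: is_path_def)

lemma is_path_mono: "is_path V E p u v \<Longrightarrow> E \<subseteq> E' \<Longrightarrow> is_path V E' p u v"
  unfolding is_path_def by blast

lemma set_subset_ends_internal_vertices:
  "p \<noteq> [] \<Longrightarrow> set p \<subseteq> {hd p, last p} \<union> internal_vertices p"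
  unfolding internal_vertices_def
  by (cases p; cases "tl p" rule: rev_cases) auto

lemma internal_vertices_not_last: "distinct p \<Longrightarrow> z \<in> internal_vertices p \<Longrightarrow> z \<noteq> last p"
  unfolding internal_vertices_def by (cases p; cases "tl p" rule: rev_cases) auto

lemma successively_invariant:
  assumes "successively P xs" "xs \<noteq> []" "I (hd xs)" "\<And>x y. P x y \<Longrightarrow> I x \<Longrightarrow> I y"
  shows "I (last xs)"
  using assms by (induction P xs rule: successively.induct) auto

lemma is_path_second_vertex:
  assumes "is_path V E p u v" "u \<noteq> v"
  obtains y where "{u, y} \<in> E" "y \<in> V" "y = v \<or> y \<in> internal_vertices p"
proof -
  obtain y rest where p: "p = u # y # rest"
    using assms unfolding is_path_def by (cases p; cases "tl p") auto
  have "{u, y} \<in> E" "y \<in> V"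
    using assms(1) p unfolding is_path_iff_successively by auto
  moreover have "y = v \<or> y \<in> internal_vertices p"
    using assms(1) p unfolding is_path_def internal_vertices_def by (cases rest) auto
  ultimately show thesis by (rule that)
qed

lemma not_avoiding_conn_if_neighbours_colored:
  assumes "u \<noteq> v" "{u, v} \<notin> E" "\<And>y. {u, y} \<in> E \<Longrightarrow> y \<in> V \<Longrightarrow> col y = c"
  shows "\<not> int_vertex_avoiding_conn V E col c u v"
proof
  assume "int_vertex_avoiding_conn V E col c u v"
  then obtain p where p: "is_path V E p u v" "\<forall>z \<in> internal_vertices p. col z \<noteq> c"
    unfolding int_vertex_avoiding_conn_def by blast
  obtain y where "{u, y} \<in> E" "y \<in> V" "y = v \<or> y \<in> internal_vertices p"
    using p(1) assms(1) by (rule is_path_second_vertex)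
  then show False using assms(2,3) p(2) by blast
qed

lemma int_vertex_avoiding_conn_if_rtranclp:
  assumes "u \<in> V" "(\<lambda>x y. {x, y} \<in> F \<and> y \<in> V \<and> (y = v \<or> col y \<noteq> c))\<^sup>*\<^sup>* u v"
  shows "int_vertex_avoiding_conn V F col c u v"
proof -
  let ?R = "\<lambda>x y. {x, y} \<in> F \<and> y \<in> V \<and> (y = v \<or> col y \<noteq> c)"
  obtain xs where "rtrancl_path ?R u xs v"
    using assms(2) by (auto simp: rtranclp_eq_rtrancl_path)
  then obtain xs where xs: "rtrancl_path ?R u xs v" "distinct (u # xs)"
    by (rule rtrancl_path_distinct)
  have range: "z \<in> V \<and> (z = v \<or> col z \<noteq> c)" if "z \<in> set xs" for z
    using rtrancl_path_Range[OF xs(1) that] by blast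
  have last: "last (u # xs) = v"
    using xs(1) by (cases xs) (auto elim: rtrancl_path.cases dest: rtrancl_path_last)
  have "is_path V F (u # xs) u v"
    unfolding is_path_def
    using xs assms(1) last range rtrancl_path_nth[OF xs(1)] by auto
  moreover have "col z \<noteq> c" if "z \<in> internal_vertices (u # xs)" for z
    using range[of z] internal_vertices_not_last[OF xs(2) that] that last
    by (auto simp: internal_vertices_def dest: in_set_butlastD)
  ultimately show ?thesis unfolding int_vertex_avoiding_conn_def by blast
qed

lemma ICAC_mono:
  "int_vertex_color_avoiding_connected V F col \<Longrightarrow> F \<subseteq> F' \<Longrightarrow>
   int_vertex_color_avoiding_connected V F' col"
  unfolding int_vertex_color_avoiding_connected_def int_vertex_avoiding_conn_def
  by (metis is_path_mono)

lemma minimal_ICAC_eq_if_subset: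
  assumes "minimal_ICAC V E col" "F \<subseteq> E" "int_vertex_color_avoiding_connected V F col"
  shows "F = E"
proof (rule ccontr)
  assume "F \<noteq> E"
  then obtain e where "e \<in> E" "F \<subseteq> E - {e}" using assms(2) by blast
  then show False
    using assms(1,3) ICAC_mono unfolding minimal_ICAC_def by blast
qed

lemma ICAC_other_color_neighbour:
  assumes "int_vertex_color_avoiding_connected V E col" "x \<in> V" "w \<in> V" "col w \<noteq> col x"
  obtains y where "y \<in> V" "col y \<noteq> col x" "{x, y} \<in> E"
proof -
  obtain p where p: "is_path V E p x w" "\<forall>z\<in>internal_vertices p. col z \<noteq> col x"
    using assms unfolding int_vertex_color_avoiding_connected_def int_vertex_avoiding_conn_def
    by blast
  have "x \<noteq> w" using assms(4) by blast
  then obtain y where "{x, y} \<in> E" "y \<in> V" "y = w \<or> y \<in> internal_vertices p"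
    by (rule is_path_second_vertex[OF p(1)])
  then show thesis using that p(2) assms(4) by blast
qed

lemma ICAC_edge_leaving:
  assumes "int_vertex_color_avoiding_connected V E col" "s \<in> R" "s \<in> V" "y \<in> V - R"
  shows "\<exists>a\<in>R. \<exists>b\<in>V - R. {a, b} \<in> E"
proof (rule ccontr)
  assume no_edge: "\<not> ?thesis"
  obtain p where p: "is_path V E p s y"
    using assms unfolding int_vertex_color_avoiding_connected_def int_vertex_avoiding_conn_def
    by blast
  then have "successively (\<lambda>a b. {a, b} \<in> E \<and> b \<in> V) p"
    unfolding is_path_iff_successively by (auto elim: successively_mono)
  moreover have "b \<in> R" if "{a, b} \<in> E \<and> b \<in> V" "a \<in> R" for a b
    using that no_edge by blast
  ultimately have "last p \<in> R"
    using p assms(2) unfolding is_path_def by (auto intro: successively_invariant)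
  then show False using p assms(4) unfolding is_path_def by simp
qed

lemma ICAC_single_color_complete:
  assumes "simple_graph V E" "int_vertex_color_avoiding_connected V E col" "card (col ` V) = 1"
  shows "E = {e. e \<subseteq> V \<and> card e = 2}"
proof
  show "E \<subseteq> {e. e \<subseteq> V \<and> card e = 2}" using assms(1) by (auto simp: simple_graph_def)
next
  obtain c where "col ` V = {c}" using assms(3) card_1_singletonE by blast
  then have monochromatic: "\<And>z. z \<in> V \<Longrightarrow> col z = c" by blast
  show "{e. e \<subseteq> V \<and> card e = 2} \<subseteq> E"
  proof
    fix e assume "e \<in> {e. e \<subseteq> V \<and> card e = 2}"
    then have "e \<subseteq> V" "card e = 2" by simp_all
    then obtain u v where e: "e = {u, v}" "u \<noteq> v" "u \<in> V" "v \<in> V"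
      by (auto simp: card_2_iff)
    have "c \<in> col ` V" using \<open>col ` V = {c}\<close> by simp
    then have "int_vertex_avoiding_conn V E col c u v"
      using assms(2) e(3,4) unfolding int_vertex_color_avoiding_connected_def by blast
    show "e \<in> E"
    proof (rule ccontr)
      assume "e \<notin> E"
      then have "\<not> int_vertex_avoiding_conn V E col c u v"
        using e monochromatic by (intro not_avoiding_conn_if_neighbours_colored) auto
      with \<open>int_vertex_avoiding_conn V E col c u v\<close> show False by contradiction
    qed
  qed
qed

section \<open>The deficiency potential\<close>

definition off_color :: "'a set \<Rightarrow> ('a \<Rightarrow> 'b) \<Rightarrow> 'b \<Rightarrow> 'a set" where
  "off_color V col c = {v \<in> V. col v \<noteq> c}"

definition adj_within :: "'a set set \<Rightarrow> 'a set \<Rightarrow> 'a \<Rightarrow> 'a \<Rightarrow> bool" where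
  "adj_within F A x y \<longleftrightarrow> x \<in> A \<and> y \<in> A \<and> {x, y} \<in> F"

definition component :: "'a set set \<Rightarrow> 'a set \<Rightarrow> 'a \<Rightarrow> 'a set" where
  "component F A x = {y. (adj_within F A)\<^sup>*\<^sup>* x y}"

definition num_components :: "'a set set \<Rightarrow> 'a set \<Rightarrow> nat" where
  "num_components F A = card (component F A ` A)"

definition stranded :: "'a set \<Rightarrow> 'a set set \<Rightarrow> ('a \<Rightarrow> 'b) \<Rightarrow> 'b \<Rightarrow> 'a set" where
  "stranded V F col c = {x \<in> V. col x = c \<and> (\<forall>w \<in> off_color V col c. {x, w} \<notin> F)}"

definition deficiency :: "'a set \<Rightarrow> 'a set set \<Rightarrow> ('a \<Rightarrow> 'b) \<Rightarrow> 'b \<Rightarrow> nat" where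
  "deficiency V F col c = num_components F (off_color V col c) + card (stranded V F col c)"

definition total_deficiency :: "'a set \<Rightarrow> 'a set set \<Rightarrow> ('a \<Rightarrow> 'b) \<Rightarrow> nat" where
  "total_deficiency V F col = (\<Sum>c \<in> col ` V. deficiency V F col c)"

definition isolated :: "'a set set \<Rightarrow> 'a \<Rightarrow> bool" where
  "isolated F y \<longleftrightarrow> (\<forall>e \<in> F. y \<notin> e)"

lemma off_color_nonempty: "2 \<le> card (col ` V) \<Longrightarrow> off_color V col c \<noteq> {}"
proof
  assume "2 \<le> card (col ` V)" "off_color V col c = {}"
  then have "col ` V \<subseteq> {c}" "2 \<le> card (col ` V)" by (auto simp: off_color_def)
  then show False using card_mono[of "{c}" "col ` V"] by simp
qed

lemma rtranclp_adj_within_mono: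
  "F \<subseteq> F' \<Longrightarrow> (adj_within F A)\<^sup>*\<^sup>* x y \<Longrightarrow> (adj_within F' A)\<^sup>*\<^sup>* x y"
  by (rule rtranclp_mono[THEN predicate2D, rotated]) (auto simp: adj_within_def)

lemma component_union_finer:
  assumes "F \<subseteq> F'"
  shows "\<Union> (component F' A ` component F A x) = component F' A x"
proof
  show "\<Union> (component F' A ` component F A x) \<subseteq> component F' A x"
    using rtranclp_adj_within_mono[OF assms]
    by (auto simp: component_def intro: rtranclp_trans)
  have "x \<in> component F A x" by (simp add: component_def)
  then show "component F' A x \<subseteq> \<Union> (component F' A ` component F A x)" by blast
qed

lemma components_coarsen:
  assumes "F \<subseteq> F'"
  shows "component F' A ` A = (\<lambda>S. \<Union> (component F' A ` S)) ` component F A ` A"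
  using component_union_finer[OF assms] by (simp add: image_image)

lemma num_components_antimono:
  "finite A \<Longrightarrow> F \<subseteq> F' \<Longrightarrow> num_components F' A \<le> num_components F A"
  unfolding num_components_def components_coarsen by (intro card_image_le) simp

lemma num_components_strict_antimono:
  assumes "finite A" "F \<subseteq> F'" "x \<in> A" "y \<in> A" "{x, y} \<in> F'" "\<not> (adj_within F A)\<^sup>*\<^sup>* x y"
  shows "num_components F' A < num_components F A"
proof -
  let ?merge = "\<lambda>S. \<Union> (component F' A ` S)"
  have "adj_within F' A x y" "adj_within F' A y x"
    using assms by (auto simp: adj_within_def insert_commute)
  then have "component F' A x = component F' A y"
    unfolding component_def by (auto intro: converse_rtranclp_into_rtranclp)
  then have "?merge (component F A x) = ?merge (component F A y)"
    using component_union_finer[OF assms(2)] by simp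
  moreover have "component F A x \<noteq> component F A y"
    using assms(6) by (auto simp: component_def)
  ultimately have "\<not> inj_on ?merge (component F A ` A)"
    using assms(3,4) unfolding inj_on_def by blast
  then have "card (?merge ` component F A ` A) < card (component F A ` A)"
    using assms(1) card_image_le inj_on_iff_eq_card
    by (metis finite_imageI order_le_imp_less_or_eq)
  then show ?thesis unfolding num_components_def components_coarsen[OF assms(2)] .
qed

lemma stranded_antimono: "F \<subseteq> F' \<Longrightarrow> stranded V F' col c \<subseteq> stranded V F col c"
  by (auto simp: stranded_def)

lemma deficiency_antimono:
  assumes "finite V" "F \<subseteq> F'"
  shows "deficiency V F' col c \<le> deficiency V F col c"
proof -
  have "num_components F' (off_color V col c) \<le> num_components F (off_color V col c)"
    using assms by (intro num_components_antimono) (auto simp: off_color_def)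
  moreover have "card (stranded V F' col c) \<le> card (stranded V F col c)"
    using assms stranded_antimono by (intro card_mono) (auto simp: stranded_def)
  ultimately show ?thesis by (simp add: deficiency_def)
qed

lemma deficiency_decrease_joining_components:
  assumes "finite V" "F \<subseteq> F'" "x \<in> off_color V col c" "y \<in> off_color V col c" "{x, y} \<in> F'"
    "\<not> (adj_within F (off_color V col c))\<^sup>*\<^sup>* x y"
  shows "deficiency V F' col c < deficiency V F col c"
proof -
  have "num_components F' (off_color V col c) < num_components F (off_color V col c)"
    using assms by (intro num_components_strict_antimono) (auto simp: off_color_def)
  moreover have "card (stranded V F' col c) \<le> card (stranded V F col c)"
    using assms stranded_antimono by (intro card_mono) (auto simp: stranded_def)
  ultimately show ?thesis by (simp add: deficiency_def)
qed

lemma deficiency_decrease_unstranding: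
  assumes "finite V" "F \<subseteq> F'" "x \<in> stranded V F col c" "y \<in> off_color V col c" "{x, y} \<in> F'"
  shows "deficiency V F' col c < deficiency V F col c"
proof -
  have "num_components F' (off_color V col c) \<le> num_components F (off_color V col c)"
    using assms by (intro num_components_antimono) (auto simp: off_color_def)
  moreover have "stranded V F' col c \<subset> stranded V F col c"
    using assms stranded_antimono by (auto simp: stranded_def)
  then have "card (stranded V F' col c) < card (stranded V F col c)"
    using assms(1) by (intro psubset_card_mono) (auto simp: stranded_def)
  ultimately show ?thesis by (simp add: deficiency_def)
qed

lemma deficiency_decrease_pendant_edge:
  assumes "finite V" "isolated F y" "x \<in> V" "y \<in> V" "x \<noteq> y" "c \<noteq> col x"
  shows "deficiency V (insert {x, y} F) col c < deficiency V F col c"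
proof (cases "col y = c")
  case True
  then have "y \<in> stranded V F col c" "x \<in> off_color V col c"
    using assms by (auto simp: stranded_def isolated_def off_color_def)
  then show ?thesis
    by (intro deficiency_decrease_unstranding[OF assms(1)]) (auto simp: insert_commute)
next
  case False
  have "\<not> (adj_within F A)\<^sup>*\<^sup>* x y" for A
  proof
    assume "(adj_within F A)\<^sup>*\<^sup>* x y"
    then obtain z where "adj_within F A z y"
      using assms(5) by (cases rule: rtranclp.cases) auto
    then show False using assms(2) by (auto simp: adj_within_def isolated_def)
  qed
  then show ?thesis
    using assms False
    by (intro deficiency_decrease_joining_components[where x = x and y = y])
      (auto simp: off_color_def)
qed

lemma total_deficiency_strict_antimono:
  assumes "finite V" "F \<subseteq> F'" "c \<in> col ` V" "deficiency V F' col c < deficiency V F col c"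
  shows "total_deficiency V F' col < total_deficiency V F col"
  unfolding total_deficiency_def
  using assms deficiency_antimono[OF assms(1,2)] by (intro sum_strict_mono_ex1) auto

lemma total_deficiency_pendant_edge:
  assumes "finite V" "isolated F y" "x \<in> V" "y \<in> V" "x \<noteq> y"
  shows "total_deficiency V (insert {x, y} F) col + (card (col ` V) - 1) \<le> total_deficiency V F col"
proof -
  let ?F' = "insert {x, y} F"
  have "(\<Sum>c \<in> col ` V. deficiency V ?F' col c + (if c = col x then 0 else 1))
      \<le> (\<Sum>c \<in> col ` V. deficiency V F col c)"
  proof (rule sum_mono)
    fix c
    show "deficiency V ?F' col c + (if c = col x then 0 else 1) \<le> deficiency V F col c"
      using deficiency_antimono[OF assms(1), of F ?F' col c]
        deficiency_decrease_pendant_edge[OF assms, where col = col and c = c]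
      by (cases "c = col x") auto
  qed
  moreover have "(\<Sum>c \<in> col ` V. if c = col x then 0 else 1::nat) = card (col ` V) - 1"
    using assms(1,3) by (simp add: sum.If_cases Diff_eq[symmetric])
  ultimately show ?thesis by (simp add: sum.distrib total_deficiency_def)
qed

lemma total_deficiency_first_edge:
  assumes "finite V" "s \<in> V" "t \<in> V" "col s \<noteq> col t"
  shows "total_deficiency V {{s, t}} col + card (col ` V) \<le> total_deficiency V {} col"
proof -
  have "deficiency V {{s, t}} col c < deficiency V {} col c" for c
  proof (cases "c = col s")
    case True
    then have "s \<in> stranded V {} col c" "t \<in> off_color V col c"
      using assms by (auto simp: stranded_def off_color_def)
    then show ?thesis by (intro deficiency_decrease_unstranding[OF assms(1)]) auto
  next
    case False
    show ?thesis
      by (rule deficiency_decrease_pendant_edge[OF assms(1)])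
        (use assms False in \<open>auto simp: isolated_def\<close>)
  qed
  then have "(\<Sum>c \<in> col ` V. deficiency V {{s, t}} col c + 1) \<le> (\<Sum>c \<in> col ` V. deficiency V {} col c)"
    by (intro sum_mono) (simp add: Suc_le_eq)
  then show ?thesis by (simp add: sum_Suc total_deficiency_def)
qed

lemma total_deficiency_empty_le:
  assumes "finite V"
  shows "total_deficiency V {} col \<le> card (col ` V) * card V"
proof -
  have "deficiency V {} col c \<le> card V" for c
  proof -
    have "num_components {} (off_color V col c) \<le> card (off_color V col c)"
      unfolding num_components_def by (rule card_image_le) (simp add: assms off_color_def)
    moreover have "card (stranded V {} col c) \<le> card (V - off_color V col c)"
      using assms by (intro card_mono) (auto simp: stranded_def off_color_def)
    moreover have "card (V - off_color V col c) = card V - card (off_color V col c)"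
      using assms by (intro card_Diff_subset) (auto simp: off_color_def)
    moreover have "card (off_color V col c) \<le> card V"
      using assms by (intro card_mono) (auto simp: off_color_def)
    ultimately show ?thesis by (simp add: deficiency_def)
  qed
  then show ?thesis
    unfolding total_deficiency_def using sum_bounded_above[of "col ` V" "deficiency V {} col"] by simp
qed

lemma card_colors_le_total_deficiency:
  assumes "finite V" "2 \<le> card (col ` V)"
  shows "card (col ` V) \<le> total_deficiency V F col"
proof -
  have "(\<Sum>c \<in> col ` V. 1) \<le> (\<Sum>c \<in> col ` V. deficiency V F col c)"
  proof (rule sum_mono)
    fix c
    have "component F (off_color V col c) ` off_color V col c \<noteq> {}"
      using off_color_nonempty[OF assms(2)] by simp
    then have "1 \<le> num_components F (off_color V col c)"
      unfolding num_components_def using assms(1)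
      by (simp add: Suc_le_eq card_gt_0_iff off_color_def)
    then show "1 \<le> deficiency V F col c" by (simp add: deficiency_def)
  qed
  then show ?thesis by (simp add: total_deficiency_def)
qed

section \<open>Greedy construction of a sparse spanning subgraph\<close>

definition serves_color :: "'a set \<Rightarrow> 'a set set \<Rightarrow> ('a \<Rightarrow> 'b) \<Rightarrow> 'b \<Rightarrow> bool" where
  "serves_color V F col c \<longleftrightarrow>
     (\<forall>p \<in> off_color V col c. \<forall>q \<in> off_color V col c. (adj_within F (off_color V col c))\<^sup>*\<^sup>* p q)
     \<and> stranded V F col c = {}"

lemma ICAC_if_serves_all_colors:
  assumes "\<And>c. c \<in> col ` V \<Longrightarrow> serves_color V F col c"
  shows "int_vertex_color_avoiding_connected V F col"
  unfolding int_vertex_color_avoiding_connected_def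
proof (intro ballI)
  fix c u v assume c: "c \<in> col ` V" and uv: "u \<in> V" "v \<in> V"
  let ?W = "off_color V col c"
  let ?R = "\<lambda>x y. {x, y} \<in> F \<and> y \<in> V \<and> (y = v \<or> col y \<noteq> c)"
  have connected: "(adj_within F ?W)\<^sup>*\<^sup>* p q" if "p \<in> ?W" "q \<in> ?W" for p q
    using assms[OF c] that unfolding serves_color_def by blast
  have neighbour: "\<exists>w \<in> ?W. {x, w} \<in> F" if "x \<in> V" "col x = c" for x
    using assms[OF c] that unfolding serves_color_def by (auto simp: stranded_def)
  obtain a where a: "a \<in> ?W" "?R\<^sup>*\<^sup>* u a"
  proof (cases "col u = c")
    case True
    then obtain w where "w \<in> ?W" "{u, w} \<in> F" using neighbour uv(1) by blast
    then show thesis by (intro that[of w]) (auto simp: off_color_def)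
  next
    case False
    then show thesis using that[of u] uv(1) by (simp add: off_color_def)
  qed
  obtain b where b: "b \<in> ?W" "?R\<^sup>*\<^sup>* b v"
  proof (cases "col v = c")
    case True
    then obtain w where "w \<in> ?W" "{v, w} \<in> F" using neighbour uv(2) by blast
    then show thesis using uv(2) by (intro that[of w]) (auto simp: insert_commute)
  next
    case False
    then show thesis using that[of v] uv(2) by (simp add: off_color_def)
  qed
  have "(adj_within F ?W)\<^sup>*\<^sup>* a b" using connected a(1) b(1) .
  then have "?R\<^sup>*\<^sup>* a b"
    by (rule rtranclp_mono[THEN predicate2D, rotated]) (auto simp: adj_within_def off_color_def)
  then have "?R\<^sup>*\<^sup>* u v" using a(2) b(2) by (meson rtranclp_trans)
  then show "int_vertex_avoiding_conn V F col c u v"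
    using uv(1) by (rule int_vertex_avoiding_conn_if_rtranclp[rotated])
qed

lemma ICAC_edge_between_components:
  assumes "int_vertex_color_avoiding_connected V E col" "c \<in> col ` V"
    "p \<in> off_color V col c" "q \<in> off_color V col c" "\<not> (adj_within F (off_color V col c))\<^sup>*\<^sup>* p q"
  shows "\<exists>x \<in> off_color V col c. \<exists>y \<in> off_color V col c.
           {x, y} \<in> E \<and> \<not> (adj_within F (off_color V col c))\<^sup>*\<^sup>* x y"
proof (rule ccontr)
  let ?W = "off_color V col c"
  assume no_edge: "\<not> ?thesis"
  have "int_vertex_avoiding_conn V E col c p q"
    using assms(1-4) unfolding int_vertex_color_avoiding_connected_def off_color_def by blast
  then obtain path where path: "is_path V E path p q" "\<forall>z \<in> internal_vertices path. col z \<noteq> c"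
    unfolding int_vertex_avoiding_conn_def by blast
  have "set path \<subseteq> ?W"
    using set_subset_ends_internal_vertices[of path] path assms(3,4)
    unfolding is_path_def off_color_def by auto
  then have "successively (\<lambda>x y. {x, y} \<in> E \<and> x \<in> ?W \<and> y \<in> ?W) path"
    using path(1) unfolding is_path_iff_successively by (auto elim: successively_mono)
  moreover have "(adj_within F ?W)\<^sup>*\<^sup>* p y"
    if "{x, y} \<in> E \<and> x \<in> ?W \<and> y \<in> ?W" "(adj_within F ?W)\<^sup>*\<^sup>* p x" for x y
    using that no_edge by (meson rtranclp_trans)
  ultimately have "(adj_within F ?W)\<^sup>*\<^sup>* p (last path)"
    using path(1) unfolding is_path_def by (auto intro: successively_invariant)
  then show False using path(1) assms(5) unfolding is_path_def by simp
qed

lemma exists_deficiency_decreasing_edge: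
  assumes "finite V" "int_vertex_color_avoiding_connected V E col" "2 \<le> card (col ` V)"
    "\<not> int_vertex_color_avoiding_connected V F col"
  obtains e where "e \<in> E" "e \<notin> F" "total_deficiency V (insert e F) col < total_deficiency V F col"
proof -
  obtain c where c: "c \<in> col ` V" and failure: "\<not> serves_color V F col c"
    using assms(4) ICAC_if_serves_all_colors[of col V F] by blast
  let ?W = "off_color V col c"
  obtain x y where xy: "{x, y} \<in> E" "{x, y} \<notin> F"
    "deficiency V (insert {x, y} F) col c < deficiency V F col c"
  proof (cases "\<forall>p \<in> ?W. \<forall>q \<in> ?W. (adj_within F ?W)\<^sup>*\<^sup>* p q")
    case False
    then obtain x y where xy: "x \<in> ?W" "y \<in> ?W" "{x, y} \<in> E" "\<not> (adj_within F ?W)\<^sup>*\<^sup>* x y"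
      using ICAC_edge_between_components[OF assms(2) c] by blast
    then have "{x, y} \<notin> F" by (auto simp: adj_within_def)
    moreover have "deficiency V (insert {x, y} F) col c < deficiency V F col c"
      using xy by (intro deficiency_decrease_joining_components[OF assms(1)]) auto
    ultimately show thesis using that xy(3) by blast
  next
    case True
    then obtain x where x: "x \<in> stranded V F col c" using failure unfolding serves_color_def by blast
    have "x \<in> V" "col x = c" using x by (auto simp: stranded_def)
    obtain w where "w \<in> V" "col w \<noteq> col x"
      using off_color_nonempty[OF assms(3)] \<open>col x = c\<close> by (auto simp: off_color_def)
    then obtain y where y: "y \<in> V" "col y \<noteq> col x" "{x, y} \<in> E"
      by (rule ICAC_other_color_neighbour[OF assms(2) \<open>x \<in> V\<close>])
    then have "{x, y} \<notin> F" using x \<open>col x = c\<close> by (auto simp: stranded_def off_color_def)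
    moreover have "deficiency V (insert {x, y} F) col c < deficiency V F col c"
      using x y \<open>col x = c\<close>
      by (intro deficiency_decrease_unstranding[OF assms(1)]) (auto simp: off_color_def)
    ultimately show thesis using that y(3) by blast
  qed
  show thesis
    using total_deficiency_strict_antimono[OF assms(1) subset_insertI c xy(3)] by (rule that[OF xy(1,2)])
qed

lemma extend_to_ICAC:
  assumes "finite V" "int_vertex_color_avoiding_connected V E col" "2 \<le> card (col ` V)"
    "F \<subseteq> E" "finite F"
  shows "\<exists>F'. F \<subseteq> F' \<and> F' \<subseteq> E \<and> int_vertex_color_avoiding_connected V F' col \<and>
           card F' + total_deficiency V F' col \<le> card F + total_deficiency V F col"
  using assms(4,5)
proof (induction "total_deficiency V F col" arbitrary: F rule: less_induct)
  case less
  show ?case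
  proof (cases "int_vertex_color_avoiding_connected V F col")
    case True
    then show ?thesis using less.prems by blast
  next
    case False
    then obtain e where e: "e \<in> E" "e \<notin> F"
      "total_deficiency V (insert e F) col < total_deficiency V F col"
      using exists_deficiency_decreasing_edge[OF assms(1-3)] by blast
    then obtain F' where "insert e F \<subseteq> F'" "F' \<subseteq> E" "int_vertex_color_avoiding_connected V F' col"
      "card F' + total_deficiency V F' col \<le> card (insert e F) + total_deficiency V (insert e F) col"
      using less.hyps[OF e(3)] less.prems by blast
    moreover have "card (insert e F) = card F + 1" using e(2) less.prems(2) by simp
    ultimately show ?thesis using e(3) by (intro exI[of _ F']) auto
  qed
qed

lemma extend_by_pendant_edges:
  assumes "finite V" "int_vertex_color_avoiding_connected V E col"
    "F \<subseteq> E" "finite F" "R \<subseteq> V" "R \<noteq> {}" "\<forall>y \<in> V - R. isolated F y"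
  shows "\<exists>F'. F \<subseteq> F' \<and> F' \<subseteq> E \<and> card F' = card F + card (V - R) \<and>
           total_deficiency V F' col + (card (col ` V) - 1) * card (V - R) \<le> total_deficiency V F col"
  using assms(3-7)
proof (induction "card (V - R)" arbitrary: F R)
  case 0
  then show ?case by auto
next
  case (Suc m)
  obtain s y where "s \<in> R" "y \<in> V - R"
    using Suc.hyps(2) Suc.prems(4) by (metis card.empty ex_in_conv nat.distinct(1))
  then obtain a b where ab: "a \<in> R" "b \<in> V - R" "{a, b} \<in> E"
    using ICAC_edge_leaving[OF assms(2)] Suc.prems(3) by blast
  let ?F = "insert {a, b} F" and ?R = "insert b R"
  have b_isolated: "isolated F b" using ab(2) Suc.prems(5) by blast
  have "a \<in> V" "a \<noteq> b" using ab Suc.prems(3) by auto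
  have "{a, b} \<notin> F" using b_isolated by (auto simp: isolated_def)
  then have card_F: "card ?F = card F + 1" using Suc.prems(2) by simp
  have "V - ?R = (V - R) - {b}" by blast
  then have card_R: "card (V - ?R) = m"
    using card_Diff_singleton[of b "V - R"] ab(2) assms(1) Suc.hyps(2) by simp
  have "isolated ?F z" if "z \<in> V - ?R" for z
  proof -
    have "isolated F z" "z \<noteq> a" "z \<noteq> b" using that Suc.prems(5) ab(1) by auto
    then show ?thesis by (simp add: isolated_def)
  qed
  then have still_isolated: "\<forall>z \<in> V - ?R. isolated ?F z" by blast
  have "?F \<subseteq> E" "finite ?F" "?R \<subseteq> V" "?R \<noteq> {}"
    using Suc.prems(1-3) ab by auto
  then obtain F' where F': "?F \<subseteq> F'" "F' \<subseteq> E" "card F' = card ?F + m"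
    "total_deficiency V F' col + (card (col ` V) - 1) * m \<le> total_deficiency V ?F col"
    using Suc.hyps(1)[OF card_R[symmetric] _ _ _ _ still_isolated] unfolding card_R by blast
  have "b \<in> V" using ab(2) by blast
  then have "total_deficiency V ?F col + (card (col ` V) - 1) \<le> total_deficiency V F col"
    by (rule total_deficiency_pendant_edge[OF assms(1) b_isolated \<open>a \<in> V\<close> _ \<open>a \<noteq> b\<close>])
  then have "total_deficiency V F' col + (card (col ` V) - 1) * Suc m \<le> total_deficiency V F col"
    using F'(4) by simp
  moreover have "card F' = card F + Suc m" using F'(3) card_F by simp
  ultimately show ?case using F'(1,2) Suc.hyps(2) by (intro exI[of _ F']) simp
qed

lemma ICAC_sparse_subgraph:
  assumes "finite V" "finite E" "int_vertex_color_avoiding_connected V E col" "2 \<le> card (col ` V)"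
  obtains F where "F \<subseteq> E" "int_vertex_color_avoiding_connected V F col" "card F \<le> 2 * card V - 3"
proof -
  let ?k = "card (col ` V)" and ?n = "card V"
  have "?k \<le> ?n" using assms(1) by (rule card_image_le)
  obtain s where "s \<in> V" using assms(4) by fastforce
  obtain w where "w \<in> V" "col w \<noteq> col s"
    using off_color_nonempty[OF assms(4)] by (auto simp: off_color_def)
  then obtain t where t: "t \<in> V" "col t \<noteq> col s" "{s, t} \<in> E"
    by (rule ICAC_other_color_neighbour[OF assms(3) \<open>s \<in> V\<close>])
  have "s \<noteq> t" using t(2) by blast
  have start: "total_deficiency V {{s, t}} col + ?k \<le> ?k * ?n"
    using total_deficiency_first_edge[OF assms(1) \<open>s \<in> V\<close> t(1) t(2)[symmetric]]
      total_deficiency_empty_le[OF assms(1), of col] by linarith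
  have "card (V - {s, t}) = ?n - 2"
    using assms(1) \<open>s \<in> V\<close> t(1) \<open>s \<noteq> t\<close> by (simp add: card_Diff_subset)
  moreover have "\<forall>y \<in> V - {s, t}. isolated {{s, t}} y" by (auto simp: isolated_def)
  ultimately obtain F1 where F1: "F1 \<subseteq> E" "card F1 = 1 + (?n - 2)"
    "total_deficiency V F1 col + (?k - 1) * (?n - 2) \<le> total_deficiency V {{s, t}} col"
    using extend_by_pendant_edges[OF assms(1,3), of "{{s, t}}" "{s, t}"] \<open>s \<in> V\<close> t
    by auto
  obtain F where F: "F \<subseteq> E" "int_vertex_color_avoiding_connected V F col"
    "card F + total_deficiency V F col \<le> card F1 + total_deficiency V F1 col"
    using extend_to_ICAC[OF assms(1,3,4) F1(1) finite_subset[OF F1(1) assms(2)]] by blast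
  have "?k \<le> total_deficiency V F col"
    using card_colors_le_total_deficiency[OF assms(1,4)] .
  moreover have "?k * ?n = (?k - 1) * (?n - 2) + (?n - 2) + 2 * ?k"
  proof -
    obtain j where "?k = 1 + j" using le_Suc_ex[of 1 ?k] assms(4) by auto
    moreover obtain m where "?n = 2 + m" using le_Suc_ex[of 2 ?n] assms(4) \<open>?k \<le> ?n\<close> by auto
    ultimately show ?thesis by (simp add: algebra_simps)
  qed
  ultimately have "card F \<le> 2 * ?n - 3"
    using start F1(2,3) F(3) assms(4) \<open>?k \<le> ?n\<close> by linarith
  with F(1,2) show thesis by (rule that)
qed

lemma minimal_ICAC_card_le:
  assumes "simple_graph V E" "minimal_ICAC V E col" "2 \<le> card (col ` V)"
  shows "card E \<le> 2 * card V - 3"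
proof -
  have "finite V" using assms(1) by (simp add: simple_graph_def)
  moreover have "E \<subseteq> Pow V" using assms(1) by (auto simp: simple_graph_def)
  ultimately have "finite E" by (meson finite_Pow_iff finite_subset)
  moreover have "int_vertex_color_avoiding_connected V E col"
    using assms(2) by (simp add: minimal_ICAC_def)
  ultimately obtain F where "F \<subseteq> E" "int_vertex_color_avoiding_connected V F col"
    "card F \<le> 2 * card V - 3"
    using \<open>finite V\<close> assms(3) by (metis ICAC_sparse_subgraph)
  then show ?thesis using minimal_ICAC_eq_if_subset[OF assms(2)] by blast
qed

section \<open>Book graphs attain the bound\<close>

definition book_edges :: "nat \<Rightarrow> nat set set" where
  "book_edges n = (\<lambda>(h, j). {h, j}) ` (SIGMA h:{0, 1}. {h<..<n})"

lemma book_edgeE: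
  assumes "e \<in> book_edges n"
  obtains h j where "e = {h, j}" "h < 2" "h < j" "j < n"
  using assms unfolding book_edges_def by auto

lemma book_edge_iff:
  "{x, y} \<in> book_edges n \<longleftrightarrow> x \<noteq> y \<and> x < n \<and> y < n \<and> (x < 2 \<or> y < 2)"
proof
  assume "{x, y} \<in> book_edges n"
  then obtain h j where "{x, y} = {h, j}" "h < 2" "h < j" "j < n" by (rule book_edgeE)
  then show "x \<noteq> y \<and> x < n \<and> y < n \<and> (x < 2 \<or> y < 2)"
    unfolding doubleton_eq_iff by auto
next
  assume xy: "x \<noteq> y \<and> x < n \<and> y < n \<and> (x < 2 \<or> y < 2)"
  show "{x, y} \<in> book_edges n"
  proof (cases "x < y")
    case True
    then show ?thesis using xy unfolding book_edges_def
      by (intro image_eqI[of _ _ "(x, y)"]) auto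
  next
    case False
    then show ?thesis using xy unfolding book_edges_def
      by (intro image_eqI[of _ _ "(y, x)"]) (auto simp: insert_commute)
  qed
qed

lemma simple_graph_book: "simple_graph {..<n} (book_edges n)"
  unfolding simple_graph_def by (auto elim: book_edgeE)

lemma card_book_edges:
  assumes "2 \<le> n"
  shows "card (book_edges n) = 2 * n - 3"
proof -
  have "inj_on (\<lambda>(h, j). {h, j}) (SIGMA h:{0::nat, 1}. {h<..<n})"
    by (auto simp: inj_on_def doubleton_eq_iff)
  then have "card (book_edges n) = card (SIGMA h:{0::nat, 1}. {h<..<n})"
    unfolding book_edges_def by (rule card_image)
  also have "\<dots> = (n - 1) + (n - 2)" by (simp add: card_SigmaI)
  finally show ?thesis using assms by simp
qed

lemma ICAC_book:
  assumes "col 0 \<noteq> col 1"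
  shows "int_vertex_color_avoiding_connected {..<n} (book_edges n) col"
  unfolding int_vertex_color_avoiding_connected_def int_vertex_avoiding_conn_def
proof (intro ballI)
  fix c u v assume u: "u \<in> {..<n}" and v: "v \<in> {..<n}"
  consider "u = v" | "u \<noteq> v" "u < 2 \<or> v < 2" | "u \<noteq> v" "2 \<le> u" "2 \<le> v" by linarith
  then show "\<exists>p. is_path {..<n} (book_edges n) p u v \<and> (\<forall>w \<in> internal_vertices p. col w \<noteq> c)"
  proof cases
    case 1
    have "is_path {..<n} (book_edges n) [u] u u" using u by (rule is_path_singleton)
    moreover have "internal_vertices [u] = {}" by (simp add: internal_vertices_def)
    ultimately show ?thesis using 1 by auto
  next
    case 2
    then have "is_path {..<n} (book_edges n) [u, v] u v"
      using u v by (simp add: is_path_iff_successively book_edge_iff)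
    moreover have "internal_vertices [u, v] = {}" by (simp add: internal_vertices_def)
    ultimately show ?thesis by auto
  next
    case 3
    define h :: nat where "h = (if col 0 \<noteq> c then 0 else 1)"
    have "col h \<noteq> c" "h < 2" using assms by (auto simp: h_def)
    then have "is_path {..<n} (book_edges n) [u, h, v] u v"
      using u v 3 by (auto simp: is_path_iff_successively book_edge_iff)
    moreover have "internal_vertices [u, h, v] = {h}" by (simp add: internal_vertices_def)
    ultimately show ?thesis using \<open>col h \<noteq> c\<close> by auto
  qed
qed

lemma minimal_ICAC_book:
  assumes "col 0 \<noteq> col 1" "\<And>j. 2 \<le> j \<Longrightarrow> col j = d" "d \<in> col ` {..<n}"
  shows "minimal_ICAC {..<n} (book_edges n) col"
  unfolding minimal_ICAC_def
proof (intro conjI ballI notI)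
  show "int_vertex_color_avoiding_connected {..<n} (book_edges n) col"
    using assms(1) by (rule ICAC_book)
next
  fix e assume e: "e \<in> book_edges n"
    and ICAC: "int_vertex_color_avoiding_connected {..<n} (book_edges n - {e}) col"
  then obtain h j where hj: "e = {h, j}" "h < 2" "h < j" "j < n" by (auto elim: book_edgeE)
  have conn: "int_vertex_avoiding_conn {..<n} (book_edges n - {e}) col c x y"
    if "c \<in> col ` {..<n}" "x < n" "y < n" for c x y
    using ICAC that unfolding int_vertex_color_avoiding_connected_def by blast
  show False
  proof (cases "j = 1")
    case True
    then have "e = {0, 1}" using hj by auto
    have "\<not> int_vertex_avoiding_conn {..<n} (book_edges n - {e}) col d 0 1"
      using assms(2) \<open>e = {0, 1}\<close>
      by (intro not_avoiding_conn_if_neighbours_colored) (auto simp: book_edge_iff)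
    then show False using conn[OF assms(3)] hj True by auto
  next
    case False
    then have "2 \<le> j" using hj by auto
    have "col y = col (1 - h)" if "{j, y} \<in> book_edges n - {e}" for y
    proof -
      have "y < 2" "y \<noteq> h" using that hj \<open>2 \<le> j\<close> by (auto simp: book_edge_iff insert_commute)
      then show ?thesis using hj(2) by (metis One_nat_def diff_Suc_1 diff_zero less_2_cases)
    qed
    then have "\<not> int_vertex_avoiding_conn {..<n} (book_edges n - {e}) col (col (1 - h)) j h"
      using hj by (intro not_avoiding_conn_if_neighbours_colored) (auto simp: insert_commute)
    then show False using conn[of "col (1 - h)" j h] hj by auto
  qed
qed

lemma book_attains_bound:
  assumes "k \<in> {2, 3}" "k \<le> n"
  shows "\<exists>(V :: nat set) (E :: nat set set) (col :: nat \<Rightarrow> nat).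
           simple_graph V E \<and> card V = n \<and> minimal_ICAC V E col \<and> card (col ` V) = k \<and>
           card E = 2 * n - 3"
proof -
  define col :: "nat \<Rightarrow> nat" where "col v = (if v < 2 then v else k - 1)" for v
  have "col ` {..<n} = {0, 1, k - 1}"
  proof
    show "col ` {..<n} \<subseteq> {0, 1, k - 1}" by (auto simp: col_def)
    have "0 \<in> col ` {..<n}" "1 \<in> col ` {..<n}"
      using assms by (force simp: col_def)+
    moreover have "k - 1 \<in> col ` {..<n}"
    proof (cases "k = 2")
      case True
      then show ?thesis using \<open>1 \<in> col ` {..<n}\<close> by simp
    next
      case False
      then have "col 2 = k - 1" "2 \<in> {..<n}" using assms by (auto simp: col_def)
      then show ?thesis by (metis imageI)
    qed
    ultimately show "{0, 1, k - 1} \<subseteq> col ` {..<n}" by blast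
  qed
  then have "card (col ` {..<n}) = k" and "k - 1 \<in> col ` {..<n}" using assms(1) by auto
  moreover have "minimal_ICAC {..<n} (book_edges n) col"
    using \<open>k - 1 \<in> col ` {..<n}\<close> by (intro minimal_ICAC_book) (auto simp: col_def)
  ultimately show ?thesis
    using assms simple_graph_book card_book_edges by (intro exI[of _ "{..<n}"] exI) auto
qed

theorem corollary3p18:
  shows "(\<forall>(V :: 'a set) (E :: 'a set set) (col :: 'a \<Rightarrow> 'b) k.
            simple_graph V E \<and> minimal_ICAC V E col \<and> card (col ` V) = k \<longrightarrow>
              (k = 1 \<longrightarrow> card E = card V choose 2) \<and>
              (k \<ge> 2 \<longrightarrow> card E \<le> 2 * card V - 3))
       \<and> (\<forall>k \<in> {2, 3}. \<forall>n \<ge> k. \<exists>(V :: nat set) (E :: nat set set) (col :: nat \<Rightarrow> nat).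
            simple_graph V E \<and> card V = n \<and> minimal_ICAC V E col \<and> card (col ` V) = k \<and>
            card E = 2 * n - 3)"
proof (intro conjI allI impI ballI)
  fix V :: "'a set" and E :: "'a set set" and col :: "'a \<Rightarrow> 'b" and k
  assume G: "simple_graph V E \<and> minimal_ICAC V E col \<and> card (col ` V) = k"
  then have "finite V" by (simp add: simple_graph_def)
  show "card E = card V choose 2" if "k = 1"
    using ICAC_single_color_complete[of V E col] G that n_subsets[OF \<open>finite V\<close>]
    by (simp add: minimal_ICAC_def)
  show "card E \<le> 2 * card V - 3" if "2 \<le> k"
    using minimal_ICAC_card_le[of V E col] G that by simp
next
  fix k n :: nat
  assume "k \<in> {2, 3}" "k \<le> n"
  then show "\<exists>(V :: nat set) (E :: nat set set) (col :: nat \<Rightarrow> nat).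
      simple_graph V E \<and> card V = n \<and> minimal_ICAC V E col \<and> card (col ` V) = k \<and>
      card E = 2 * n - 3"
    by (rule book_attains_bound)
qed

end
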